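(* Let $k$ be a positive integer and let $f:\mathbb R^N\to\mathbb R$ be a $C^{2k+1}$ function with a critical point at the origin and $f(0)=0$. Suppose $\{\mathbf x(t;\mathbf x_0)\}_{\mathbf x_0\in S}$ is a family of test trajectories that is indicative at order $2k$ for $f$, with $a_{2k}(\mathbf x_0)$ the coefficient of $t^{2k}$ in the Taylor expansion of $f(\mathbf x(t;\mathbf x_0))$ at $t=0$. Then: (a) If $a_{2k}(\mathbf x_0)>0$ for all $\mathbf x_0\in S$, then there exist $c>0$ and a neighborhood $U$ of the origin such that $f(\mathbf x)\ge c|\mathbf x|^{2k}$ for all $\mathbf x\in U$; in particular $f$ has a strict local minimum at the origin. (b) If $a_{2k}(\mathbf x_0)<0$ for all $\mathbf x_0\in S$, then there exist $c>0$ and a neighborhood $U$ of the origin such that $f(\mathbf x)\le -c|\mathbf x|^{2k}$ for all $\mathbf x\in U$; in particular $f$ has a strict local maximum at the origin. (c) If $a_{2k}(\mathbf x_0)>0$ for some $\mathbf x_0\in S$ and $a_{2k}(\mathbf x_0')<0$ for some $\mathbf x_0'\in S$, then the origin is a saddle point of $f$.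
   Context: A family of test trajectories $\{\mathbf x(t;\mathbf x_0)\}_{\mathbf x_0\in S}$ (with $S$ a set of parameter values in some Euclidean space) consists of maps defined for $t$ in a common interval $[0,\varepsilon]$ such that, for each fixed $\mathbf x_0\in S$, $t\mapsto\mathbf x(t;\mathbf x_0)\in\mathbb R^N$ is analytic and non-constant with $\mathbf x(0;\mathbf x_0)=0$. Such a family is indicative at order $2k$ for $f$ (where $f$ is $C^{2k+1}$ with a critical point at $0$ and $f(0)=0$) if: (I1) $S$ is compact; (I2) $(t,\mathbf x_0)\mapsto\mathbf x(t;\mathbf x_0)$ is $C^{2k+1}$; (I3) for every $0<\delta\le\varepsilon$ there is a neighborhood $U$ of the origin such that every $\mathbf x\in U$ equals $\mathbf x(t;\mathbf x_0)$ for some $\mathbf x_0\in S$ and $t\in[0,\delta]$; (I4) for every $\mathbf x_0\in S$, $f(\mathbf x(t;\mathbf x_0))=a_{2k}(\mathbf x_0)t^{2k}+o(t^{2k})$ as $t\to0$, i.e. all Taylor coefficients in $t$ of order less than $2k$ vanish. The origin is a saddle point of $f$ if every neighborhood of the origin contains points where $f>0$ and points where $f<0$. *)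

theory Defs
  imports "HOL-Analysis.Analysis" "HOL-Library.Landau_Symbols"
begin

primrec C_on :: "nat \<Rightarrow> 'a::euclidean_space set \<Rightarrow> ('a \<Rightarrow> real) \<Rightarrow> bool" where
  "C_on 0 U g \<longleftrightarrow> continuous_on U g"
| "C_on (Suc m) U g \<longleftrightarrow>
     (\<forall>i\<in>Basis. \<exists>g'. (\<forall>x\<in>U. ((\<lambda>t. g (x + t *\<^sub>R i)) has_real_derivative g' x) (at 0))
                      \<and> C_on m U g')"

definition C_vec_on :: "nat \<Rightarrow> 'a::euclidean_space set \<Rightarrow> ('a \<Rightarrow> 'b::euclidean_space) \<Rightarrow> bool" where
  "C_vec_on m U g \<longleftrightarrow> (\<forall>j\<in>Basis. C_on m U (\<lambda>x. g x \<bullet> j))"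

definition real_analytic_on :: "(real \<Rightarrow> 'a::real_normed_vector) \<Rightarrow> real set \<Rightarrow> bool" where
  "real_analytic_on g T \<longleftrightarrow>
     (\<forall>t0\<in>T. \<exists>r>0. \<exists>c::nat \<Rightarrow> 'a. \<forall>t. \<bar>t - t0\<bar> < r \<longrightarrow> (\<lambda>n. (t - t0) ^ n *\<^sub>R c n) sums g t)"

definition test_trajectories ::
    "(real \<Rightarrow> 'b::euclidean_space \<Rightarrow> 'a::euclidean_space) \<Rightarrow> 'b set \<Rightarrow> real \<Rightarrow> bool" where
  "test_trajectories x S \<epsilon> \<longleftrightarrow> \<epsilon> > 0 \<and>
     (\<forall>x0\<in>S. real_analytic_on (\<lambda>t. x t x0) {0..\<epsilon>} \<and> x 0 x0 = 0 \<and>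
              (\<exists>t\<in>{0..\<epsilon>}. x t x0 \<noteq> 0))"

text \<open>Indicative at order 2k for f, conditions (I1)-(I4). (I2) is read as: the map
  (t,x0) |-> x(t;x0) is C^(2k+1) on some open neighbourhood of [0,eps] x S.\<close>
definition indicative ::
    "(real \<Rightarrow> 'b::euclidean_space \<Rightarrow> 'a::euclidean_space) \<Rightarrow> 'b set \<Rightarrow> real \<Rightarrow> nat \<Rightarrow> ('a \<Rightarrow> real) \<Rightarrow> bool" where
  "indicative x S \<epsilon> k f \<longleftrightarrow>
     compact S \<and>
     (\<exists>W. open W \<and> {0..\<epsilon>} \<times> S \<subseteq> W \<and> C_vec_on (2*k+1) W (\<lambda>p. x (fst p) (snd p))) \<and>
     (\<forall>\<delta>. 0 < \<delta> \<and> \<delta> \<le> \<epsilon> \<longrightarrow>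
        (\<exists>U. open U \<and> 0 \<in> U \<and> (\<forall>y\<in>U. \<exists>x0\<in>S. \<exists>t\<in>{0..\<delta>}. y = x t x0))) \<and>
     (\<forall>x0\<in>S. \<exists>a::real. (\<lambda>t. f (x t x0) - a * t ^ (2*k)) \<in> o[at_right 0](\<lambda>t. t ^ (2*k)))"

definition saddle_point :: "('a::real_normed_vector \<Rightarrow> real) \<Rightarrow> bool" where
  "saddle_point f \<longleftrightarrow>
     (\<forall>U. open U \<and> 0 \<in> U \<longrightarrow> (\<exists>y\<in>U. f y > 0) \<and> (\<exists>y\<in>U. f y < 0))"

end

theory Submission
  imports Defs
begin

(* Put g(t, x0) = f (x t x0). Since g is C^(2k+1) near the compact set [0, eps] x S, Taylor's
   formula in t holds with a remainder bounded by C t^(2k+1) uniformly in x0, and the o(t^(2k))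
   hypothesis forces the Taylor polynomial to be a(x0) t^(2k). Hence a is continuous and
   |g(t, x0) - a(x0) t^(2k)| <= C t^(2k+1); the trajectories moreover satisfy |x(t; x0)| <= M t.
   If a > 0 on S, it has a positive minimum alpha, and every y near 0 is some x(t; x0) with t
   small, so that f y >= alpha/2 t^(2k) >= alpha/(2 M^(2k)) |y|^(2k). Part (b) is part (a) for -f,
   and (c) follows by moving along a trajectory with a > 0 and along one with a < 0.
   As C^m is defined through partial derivatives, the chain rule needed for g rests on the
   classical fact that continuous partial derivatives give a Frechet derivative. *)

section \<open>Continuous partial derivatives\<close>

lemma has_real_derivative_line_shift:
  fixes g :: "'a::real_normed_vector \<Rightarrow> real"
  assumes "((\<lambda>t. g ((p + s *\<^sub>R b) + t *\<^sub>R b)) has_real_derivative D) (at 0)"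
  shows "((\<lambda>t. g (p + t *\<^sub>R b)) has_real_derivative D) (at s)"
proof -
  have "((\<lambda>t. g (p + (t + s) *\<^sub>R b)) has_real_derivative D) (at 0)"
    using assms by (simp add: algebra_simps)
  then show ?thesis
    using DERIV_shift[of "\<lambda>t. g (p + t *\<^sub>R b)" D 0 s] by (simp only: add_0_left)
qed

lemma DERIV_close_to_const_bound:
  fixes \<phi> :: "real \<Rightarrow> real"
  assumes "\<And>s. s \<in> {min 0 c..max 0 c} \<Longrightarrow> (\<phi> has_real_derivative \<phi>' s) (at s) \<and> \<bar>\<phi>' s - L\<bar> \<le> e"
  shows "\<bar>\<phi> c - \<phi> 0 - c * L\<bar> \<le> e * \<bar>c\<bar>"
proof -
  have "norm ((\<lambda>s. \<phi> s - s * L) c - (\<lambda>s. \<phi> s - s * L) 0) \<le> e * norm (c - 0)"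
  proof (rule field_differentiable_bound[where S = "{min 0 c..max 0 c}" and f' = "\<lambda>s. \<phi>' s - L"])
    fix s assume "s \<in> {min 0 c..max 0 c}"
    then have "(\<phi> has_real_derivative \<phi>' s) (at s)" and "\<bar>\<phi>' s - L\<bar> \<le> e"
      using assms by auto
    then show "((\<lambda>s. \<phi> s - s * L) has_field_derivative \<phi>' s - L) (at s within {min 0 c..max 0 c})"
      and "norm (\<phi>' s - L) \<le> e"
      by (auto intro!: derivative_eq_intros intro: has_field_derivative_at_within)
  qed auto
  then show ?thesis by simp
qed

lemma norm_remove_Basis_component_le:
  fixes h :: "'a::euclidean_space"
  assumes "b \<in> Basis" "\<bar>s\<bar> \<le> \<bar>h \<bullet> b\<bar>"
  shows "norm (h - (h \<bullet> b) *\<^sub>R b + s *\<^sub>R b) \<le> norm h"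
proof -
  let ?h' = "h - (h \<bullet> b) *\<^sub>R b"
  have orth: "orthogonal ?h' (r *\<^sub>R b)" for r
    using assms(1) by (simp add: orthogonal_def inner_diff_left)
  have "(norm (?h' + s *\<^sub>R b))\<^sup>2 = (norm ?h')\<^sup>2 + s\<^sup>2"
    using norm_add_Pythagorean[OF orth] assms(1) by simp
  also have "\<dots> \<le> (norm ?h')\<^sup>2 + (h \<bullet> b)\<^sup>2"
    using assms(2) by (simp add: abs_le_square_iff)
  also have "\<dots> = (norm h)\<^sup>2"
    using norm_add_Pythagorean[OF orth, of "h \<bullet> b"] assms(1) by simp
  finally show ?thesis by (rule power2_le_imp_le) simp
qed

lemma line_increment_bound:
  fixes g :: "'a::real_normed_vector \<Rightarrow> real"
  assumes partial: "\<And>q. q \<in> V \<Longrightarrow> ((\<lambda>t. g (q + t *\<^sub>R b)) has_real_derivative G q) (at 0)"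
    and close: "\<And>q. q \<in> V \<Longrightarrow> \<bar>G q - L\<bar> \<le> e"
    and segment: "\<And>s. \<bar>s\<bar> \<le> \<bar>c\<bar> \<Longrightarrow> q + s *\<^sub>R b \<in> V"
  shows "\<bar>g (q + c *\<^sub>R b) - g q - c * L\<bar> \<le> e * \<bar>c\<bar>"
proof -
  have "\<bar>g (q + c *\<^sub>R b) - g (q + 0 *\<^sub>R b) - c * L\<bar> \<le> e * \<bar>c\<bar>"
  proof (rule DERIV_close_to_const_bound)
    fix s assume "s \<in> {min 0 c..max 0 c}"
    then have "q + s *\<^sub>R b \<in> V" by (intro segment) auto
    then show "((\<lambda>s. g (q + s *\<^sub>R b)) has_real_derivative G (q + s *\<^sub>R b)) (at s)
        \<and> \<bar>G (q + s *\<^sub>R b) - L\<bar> \<le> e"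
      using has_real_derivative_line_shift[OF partial] close by blast
  qed
  then show ?thesis by simp
qed

(* The mean value theorem, applied one coordinate direction at a time. *)
lemma partials_increment_bound:
  fixes g :: "'a::euclidean_space \<Rightarrow> real"
  assumes partial: "\<And>i q. i \<in> Basis \<Longrightarrow> q \<in> ball p d \<Longrightarrow>
      ((\<lambda>t. g (q + t *\<^sub>R i)) has_real_derivative G i q) (at 0)"
    and close: "\<And>i q. i \<in> Basis \<Longrightarrow> q \<in> ball p d \<Longrightarrow> \<bar>G i q - G i p\<bar> \<le> e"
    and h: "norm h < d"
  shows "\<bar>g (p + h) - g p - (\<Sum>i\<in>Basis. (h \<bullet> i) * G i p)\<bar> \<le> e * (\<Sum>i\<in>Basis. \<bar>h \<bullet> i\<bar>)"
proof -
  have in_ball: "p + v \<in> ball p d" if "norm v < d" for v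
    using that by (simp add: dist_norm norm_minus_commute)
  have "\<forall>h. (\<forall>i\<in>Basis - B. h \<bullet> i = 0) \<longrightarrow> norm h < d \<longrightarrow>
     \<bar>g (p + h) - g p - (\<Sum>i\<in>B. (h \<bullet> i) * G i p)\<bar> \<le> e * (\<Sum>i\<in>B. \<bar>h \<bullet> i\<bar>)"
    if "B \<subseteq> Basis" for B
    using finite_subset[OF that finite_Basis] that
  proof (induction B rule: finite_subset_induct')
    case empty
    then show ?case by (simp add: euclidean_all_zero_iff)
  next
    case (insert b B)
    show ?case
    proof (intro allI impI)
      fix h :: 'a
      assume supp: "\<forall>i\<in>Basis - insert b B. h \<bullet> i = 0" and hd: "norm h < d"
      define c where "c = h \<bullet> b"
      define h' where "h' = h - c *\<^sub>R b"
      have h'_comp: "h' \<bullet> i = (if i = b then 0 else h \<bullet> i)" if "i \<in> Basis" for i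
        using that insert.hyps(2) by (auto simp: h'_def c_def inner_diff_left inner_not_same_Basis)
      have near: "p + h' + s *\<^sub>R b \<in> ball p d" if "\<bar>s\<bar> \<le> \<bar>c\<bar>" for s
      proof -
        have "norm (h' + s *\<^sub>R b) < d"
          using norm_remove_Basis_component_le[OF insert.hyps(2), of s h] that hd
          by (simp add: h'_def c_def)
        then show ?thesis
          using in_ball by (simp only: add.assoc)
      qed
      have IH: "\<bar>g (p + h') - g p - (\<Sum>i\<in>B. (h' \<bullet> i) * G i p)\<bar> \<le> e * (\<Sum>i\<in>B. \<bar>h' \<bullet> i\<bar>)"
        using insert.IH near[of 0] supp h'_comp by (simp add: dist_norm norm_minus_commute)
      have "\<bar>g (p + h' + c *\<^sub>R b) - g (p + h') - c * G b p\<bar> \<le> e * \<bar>c\<bar>"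
        by (rule line_increment_bound[where V = "ball p d" and G = "G b"])
          (use insert.hyps(2) partial close near in auto)
      then have step: "\<bar>g (p + h) - g (p + h') - c * G b p\<bar> \<le> e * \<bar>c\<bar>"
        by (simp add: h'_def algebra_simps)
      have "(\<Sum>i\<in>B. (h' \<bullet> i) * G i p) = (\<Sum>i\<in>B. (h \<bullet> i) * G i p)"
        "(\<Sum>i\<in>B. \<bar>h' \<bullet> i\<bar>) = (\<Sum>i\<in>B. \<bar>h \<bullet> i\<bar>)"
        using insert.hyps h'_comp by (auto intro!: sum.cong)
      then show "\<bar>g (p + h) - g p - (\<Sum>i\<in>insert b B. (h \<bullet> i) * G i p)\<bar>
          \<le> e * (\<Sum>i\<in>insert b B. \<bar>h \<bullet> i\<bar>)"
        using insert.hyps IH step by (simp add: c_def algebra_simps)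
    qed
  qed
  then show ?thesis using h by auto
qed

lemma continuous_partials_imp_has_derivative:
  fixes g :: "'a::euclidean_space \<Rightarrow> real"
  assumes U: "open U" "p \<in> U"
    and partial: "\<And>i q. i \<in> Basis \<Longrightarrow> q \<in> U \<Longrightarrow>
      ((\<lambda>t. g (q + t *\<^sub>R i)) has_real_derivative G i q) (at 0)"
    and cont: "\<And>i. i \<in> Basis \<Longrightarrow> continuous_on U (G i)"
  shows "(g has_derivative (\<lambda>v. \<Sum>i\<in>Basis. (v \<bullet> i) * G i p)) (at p)"
  unfolding has_derivative_at_alt
proof (intro conjI allI impI)
  show "bounded_linear (\<lambda>v. \<Sum>i\<in>Basis. (v \<bullet> i) * G i p)"
    by (intro bounded_linear_sum bounded_linear_mult_const bounded_linear_inner_left)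
  fix e :: real assume e: "e > 0"
  define e' where "e' = e / real DIM('a)"
  have e': "e' > 0" using e by (simp add: e'_def)
  have "\<forall>\<^sub>F q in nhds p. q \<in> U \<and> \<bar>G i q - G i p\<bar> < e'" if "i \<in> Basis" for i
  proof -
    have "(G i \<longlongrightarrow> G i p) (nhds p)"
      using cont[OF that] U continuous_on_eq_continuous_at tendsto_at_iff_tendsto_nhds isCont_def
      by metis
    then have "\<forall>\<^sub>F q in nhds p. dist (G i q) (G i p) < e'"
      using e' by (rule tendstoD)
    then show ?thesis
      using eventually_conj[OF eventually_nhds_in_open[OF U]] by (simp add: dist_real_def)
  qed
  then have "\<forall>\<^sub>F q in nhds p. \<forall>i\<in>Basis. q \<in> U \<and> \<bar>G i q - G i p\<bar> < e'"
    by (simp add: eventually_ball_finite)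
  then obtain d where d: "d > 0" and near: "\<And>q. q \<in> ball p d \<Longrightarrow> \<forall>i\<in>Basis. q \<in> U \<and> \<bar>G i q - G i p\<bar> < e'"
    unfolding eventually_nhds_metric by (auto simp: dist_commute)
  show "\<exists>d>0. \<forall>y. norm (y - p) < d \<longrightarrow>
      norm (g y - g p - (\<Sum>i\<in>Basis. ((y - p) \<bullet> i) * G i p)) \<le> e * norm (y - p)"
  proof (intro exI[of _ d] conjI allI impI)
    fix y assume y: "norm (y - p) < d"
    have "\<bar>g (p + (y - p)) - g p - (\<Sum>i\<in>Basis. ((y - p) \<bullet> i) * G i p)\<bar>
        \<le> e' * (\<Sum>i\<in>Basis. \<bar>(y - p) \<bullet> i\<bar>)"
      using near nonempty_Basis
      by (intro partials_increment_bound[OF _ _ y]) (auto intro: partial less_imp_le)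
    also have "\<dots> \<le> e' * (\<Sum>i\<in>(Basis::'a set). norm (y - p))"
      using e' by (intro mult_left_mono sum_mono Basis_le_norm) auto
    also have "\<dots> = e * norm (y - p)" using e by (simp add: e'_def)
    finally show "norm (g y - g p - (\<Sum>i\<in>Basis. ((y - p) \<bullet> i) * G i p)) \<le> e * norm (y - p)"
      by simp
  qed (rule d)
qed

section \<open>Calculus of the classes C_on\<close>

lemma C_on_SucD:
  assumes "C_on (Suc m) U g"
  obtains G where "\<And>i q. i \<in> Basis \<Longrightarrow> q \<in> U \<Longrightarrow> ((\<lambda>t. g (q + t *\<^sub>R i)) has_real_derivative G i q) (at 0)"
    and "\<And>i. i \<in> Basis \<Longrightarrow> C_on m U (G i)"
  using assms by (auto dest!: bchoice)

lemma C_on_imp_continuous_on: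
  fixes g :: "'a::euclidean_space \<Rightarrow> real"
  assumes "open U"
  shows "C_on m U g \<Longrightarrow> continuous_on U g"
proof (induction m arbitrary: g)
  case 0
  then show ?case by simp
next
  case (Suc m)
  obtain G where partial: "\<And>i q. i \<in> Basis \<Longrightarrow> q \<in> U \<Longrightarrow>
      ((\<lambda>t. g (q + t *\<^sub>R i)) has_real_derivative G i q) (at 0)"
    and G: "\<And>i. i \<in> Basis \<Longrightarrow> C_on m U (G i)"
    using C_on_SucD[OF Suc.prems] by metis
  show ?case
  proof (rule continuous_at_imp_continuous_on, intro ballI)
    fix p assume "p \<in> U"
    have "(g has_derivative (\<lambda>v. \<Sum>i\<in>Basis. (v \<bullet> i) * G i p)) (at p)"
      using assms \<open>p \<in> U\<close> partial Suc.IH[OF G] by (rule continuous_partials_imp_has_derivative)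
    then show "isCont g p" by (rule has_derivative_continuous)
  qed
qed

lemma C_on_Suc_has_derivative:
  fixes g :: "'a::euclidean_space \<Rightarrow> real"
  assumes "open U" "C_on (Suc m) U g"
  obtains G where "\<And>i q. i \<in> Basis \<Longrightarrow> q \<in> U \<Longrightarrow> ((\<lambda>t. g (q + t *\<^sub>R i)) has_real_derivative G i q) (at 0)"
    and "\<And>i. i \<in> Basis \<Longrightarrow> C_on m U (G i)"
    and "\<And>p. p \<in> U \<Longrightarrow> (g has_derivative (\<lambda>v. \<Sum>i\<in>Basis. (v \<bullet> i) * G i p)) (at p)"
proof -
  obtain G where partial: "\<And>i q. i \<in> Basis \<Longrightarrow> q \<in> U \<Longrightarrow>
      ((\<lambda>t. g (q + t *\<^sub>R i)) has_real_derivative G i q) (at 0)"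
    and G: "\<And>i. i \<in> Basis \<Longrightarrow> C_on m U (G i)"
    using C_on_SucD[OF assms(2)] by metis
  show ?thesis
    by (rule that[OF partial G continuous_partials_imp_has_derivative[OF assms(1) _ partial]])
      (auto intro: C_on_imp_continuous_on[OF assms(1) G])
qed

lemma C_on_Suc_imp_C_on:
  fixes g :: "'a::euclidean_space \<Rightarrow> real"
  assumes "open U"
  shows "C_on (Suc m) U g \<Longrightarrow> C_on m U g"
proof (induction m arbitrary: g)
  case 0
  then have "continuous_on U g" by (rule C_on_imp_continuous_on[OF assms])
  then show ?case by simp
next
  case (Suc m)
  have "\<forall>i\<in>Basis. \<exists>g'. (\<forall>x\<in>U. ((\<lambda>t. g (x + t *\<^sub>R i)) has_real_derivative g' x) (at 0))
      \<and> C_on (Suc m) U g'"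
    using Suc.prems by (simp only: C_on.simps(2)[of "Suc m"])
  then show ?case using Suc.IH by (simp only: C_on.simps(2)[of m]) blast
qed

lemma C_on_mono:
  fixes g :: "'a::euclidean_space \<Rightarrow> real"
  assumes "open U" "m \<le> n" "C_on n U g"
  shows "C_on m U g"
  using assms(2,3) by (induction rule: dec_induct) (blast dest: C_on_Suc_imp_C_on[OF assms(1)])+

lemma C_on_const: "C_on m U (\<lambda>x. c)"
  by (induction m arbitrary: c) (auto intro!: exI[of _ "\<lambda>x. 0"])

lemma C_on_add:
  "C_on m U g \<Longrightarrow> C_on m U h \<Longrightarrow> C_on m U (\<lambda>x. g x + h x)"
proof (induction m arbitrary: g h)
  case 0
  then show ?case by (simp add: continuous_on_add)
next
  case (Suc m)
  show ?case
  proof (simp only: C_on.simps, intro ballI)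
    fix i :: 'a assume i: "i \<in> Basis"
    obtain g' where g': "\<forall>x\<in>U. ((\<lambda>t. g (x + t *\<^sub>R i)) has_real_derivative g' x) (at 0)" "C_on m U g'"
      using Suc.prems(1) i by auto
    obtain h' where h': "\<forall>x\<in>U. ((\<lambda>t. h (x + t *\<^sub>R i)) has_real_derivative h' x) (at 0)" "C_on m U h'"
      using Suc.prems(2) i by auto
    show "\<exists>G. (\<forall>x\<in>U. ((\<lambda>t. g (x + t *\<^sub>R i) + h (x + t *\<^sub>R i)) has_real_derivative G x) (at 0))
        \<and> C_on m U G"
      using g' h' Suc.IH by (intro exI[of _ "\<lambda>x. g' x + h' x"]) (auto intro!: derivative_eq_intros)
  qed
qed

lemma C_on_sum:
  "finite A \<Longrightarrow> (\<And>a. a \<in> A \<Longrightarrow> C_on m U (g a)) \<Longrightarrow> C_on m U (\<lambda>x. \<Sum>a\<in>A. g a x)"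
  by (induction A rule: finite_induct) (simp_all add: C_on_const C_on_add)

lemma C_on_mult:
  fixes g :: "'a::euclidean_space \<Rightarrow> real"
  assumes U: "open U"
  shows "C_on m U g \<Longrightarrow> C_on m U h \<Longrightarrow> C_on m U (\<lambda>x. g x * h x)"
proof (induction m arbitrary: g h)
  case 0
  then show ?case by (simp add: continuous_on_mult)
next
  case (Suc m)
  have gm: "C_on m U g" and hm: "C_on m U h"
    using Suc.prems C_on_Suc_imp_C_on[OF U] by blast+
  show ?case
  proof (simp only: C_on.simps, intro ballI)
    fix i :: 'a assume i: "i \<in> Basis"
    obtain g' where g': "\<forall>x\<in>U. ((\<lambda>t. g (x + t *\<^sub>R i)) has_real_derivative g' x) (at 0)" "C_on m U g'"
      using Suc.prems(1) i by auto
    obtain h' where h': "\<forall>x\<in>U. ((\<lambda>t. h (x + t *\<^sub>R i)) has_real_derivative h' x) (at 0)" "C_on m U h'"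
      using Suc.prems(2) i by auto
    have "C_on m U (\<lambda>x. g' x * h x + h' x * g x)"
      using Suc.IH g'(2) h'(2) gm hm by (intro C_on_add) auto
    moreover have "((\<lambda>t. g (x + t *\<^sub>R i) * h (x + t *\<^sub>R i)) has_real_derivative g' x * h x + h' x * g x) (at 0)"
      if "x \<in> U" for x
      using DERIV_mult[OF g'(1)[rule_format, OF that] h'(1)[rule_format, OF that]] by simp
    ultimately show "\<exists>G. (\<forall>x\<in>U. ((\<lambda>t. g (x + t *\<^sub>R i) * h (x + t *\<^sub>R i)) has_real_derivative G x) (at 0))
        \<and> C_on m U G"
      by (intro exI[of _ "\<lambda>x. g' x * h x + h' x * g x"] conjI ballI)
  qed
qed

lemma C_on_uminus:
  fixes g :: "'a::euclidean_space \<Rightarrow> real"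
  assumes "open U" "C_on m U g"
  shows "C_on m U (\<lambda>x. - g x)"
  using C_on_mult[OF assms(1) C_on_const assms(2), of "-1"] by simp

lemma has_real_derivative_compose_partials:
  fixes f :: "'a::euclidean_space \<Rightarrow> real" and \<gamma> :: "real \<Rightarrow> 'a"
  assumes f: "(f has_derivative (\<lambda>w. \<Sum>j\<in>Basis. (w \<bullet> j) * F j)) (at (\<gamma> t))"
    and \<gamma>: "\<And>j. j \<in> Basis \<Longrightarrow> ((\<lambda>s. \<gamma> s \<bullet> j) has_real_derivative \<Gamma> j) (at t)"
  shows "((\<lambda>s. f (\<gamma> s)) has_real_derivative (\<Sum>j\<in>Basis. F j * \<Gamma> j)) (at t)"
proof -
  define v where "v = (\<Sum>j\<in>Basis. \<Gamma> j *\<^sub>R j)"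
  have v: "v \<bullet> j = \<Gamma> j" if "j \<in> Basis" for j
    using that by (simp add: v_def)
  have "(\<gamma> has_derivative (\<lambda>s. s *\<^sub>R v)) (at t)"
  proof (rule iffD2[OF has_derivative_componentwise_within], intro ballI)
    fix j :: 'a assume j: "j \<in> Basis"
    have "(\<lambda>s. s *\<^sub>R v \<bullet> j) = (\<lambda>s. \<Gamma> j * s)"
      using v[OF j] by (auto simp: fun_eq_iff)
    then show "((\<lambda>s. \<gamma> s \<bullet> j) has_derivative (\<lambda>s. s *\<^sub>R v \<bullet> j)) (at t)"
      using \<gamma>[OF j] by (simp add: has_field_derivative_def)
  qed
  from diff_chain_at[OF this f] have "((\<lambda>s. f (\<gamma> s)) has_derivative (\<lambda>s. \<Sum>j\<in>Basis. (s *\<^sub>R v \<bullet> j) * F j)) (at t)"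
    by (simp add: o_def)
  moreover have "(\<lambda>s. \<Sum>j\<in>Basis. (s *\<^sub>R v \<bullet> j) * F j) = (\<lambda>s. (\<Sum>j\<in>Basis. F j * \<Gamma> j) * s)"
    by (auto simp: v sum_distrib_left sum_distrib_right mult_ac intro!: sum.cong)
  ultimately show ?thesis by (simp add: has_field_derivative_def)
qed

lemma C_on_compose:
  fixes f :: "'a::euclidean_space \<Rightarrow> real" and x :: "'c::euclidean_space \<Rightarrow> 'a"
  assumes W: "open W"
  shows "C_on m UNIV f \<Longrightarrow> (\<And>j. j \<in> Basis \<Longrightarrow> C_on m W (\<lambda>p. x p \<bullet> j)) \<Longrightarrow> C_on m W (\<lambda>p. f (x p))"
proof (induction m arbitrary: f)
  case 0
  have "continuous_on W (\<lambda>p. \<Sum>j\<in>Basis. (x p \<bullet> j) *\<^sub>R j)"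
    using 0 by (intro continuous_on_sum continuous_on_scaleR) auto
  then show ?case
    using 0 by (auto simp: euclidean_representation intro: continuous_on_compose2)
next
  case (Suc m)
  obtain F where F: "\<And>j. j \<in> Basis \<Longrightarrow> C_on m UNIV (F j)"
    and dF: "\<And>p. p \<in> UNIV \<Longrightarrow> (f has_derivative (\<lambda>v. \<Sum>j\<in>Basis. (v \<bullet> j) * F j p)) (at p)"
    using C_on_Suc_has_derivative[OF open_UNIV Suc.prems(1)] by metis
  have xm: "C_on m W (\<lambda>p. x p \<bullet> j)" if "j \<in> Basis" for j
    using Suc.prems(2)[OF that] C_on_Suc_imp_C_on[OF W] by blast
  show ?case
  proof (simp only: C_on.simps, intro ballI)
    fix i :: 'c assume "i \<in> Basis"
    then have "\<forall>j\<in>Basis. \<exists>X. (\<forall>q\<in>W. ((\<lambda>t. x (q + t *\<^sub>R i) \<bullet> j) has_real_derivative X q) (at 0))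
        \<and> C_on m W X"
      using Suc.prems(2) by simp
    then obtain X where X: "\<And>j q. j \<in> Basis \<Longrightarrow> q \<in> W \<Longrightarrow>
        ((\<lambda>t. x (q + t *\<^sub>R i) \<bullet> j) has_real_derivative X j q) (at 0)"
      and XC: "\<And>j. j \<in> Basis \<Longrightarrow> C_on m W (X j)"
      by metis
    have "C_on m W (\<lambda>q. F j (x q))" if "j \<in> Basis" for j
      using Suc.IH[OF F[OF that] xm] .
    then have "C_on m W (\<lambda>q. \<Sum>j\<in>Basis. F j (x q) * X j q)"
      using XC by (intro C_on_sum C_on_mult[OF W]) auto
    moreover have "((\<lambda>t. f (x (q + t *\<^sub>R i))) has_real_derivative (\<Sum>j\<in>Basis. F j (x q) * X j q)) (at 0)"
      if "q \<in> W" for q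
    proof (rule has_real_derivative_compose_partials)
      show "(f has_derivative (\<lambda>w. \<Sum>j\<in>Basis. (w \<bullet> j) * F j (x q))) (at (x (q + 0 *\<^sub>R i)))"
        using dF by simp
    qed (rule X[OF _ that])
    ultimately show "\<exists>G. (\<forall>q\<in>W. ((\<lambda>t. f (x (q + t *\<^sub>R i))) has_real_derivative G q) (at 0)) \<and> C_on m W G"
      by (intro exI[of _ "\<lambda>q. \<Sum>j\<in>Basis. F j (x q) * X j q"] conjI ballI)
  qed
qed

section \<open>Uniform Taylor expansion in time\<close>

lemma C_on_iterated_directional_derivatives:
  fixes g :: "'c::euclidean_space \<Rightarrow> real"
  assumes W: "open W" and e: "e \<in> Basis"
  shows "C_on n W g \<Longrightarrow> \<exists>D. D 0 = g
    \<and> (\<forall>j<n. \<forall>q\<in>W. ((\<lambda>s. D j (q + s *\<^sub>R e)) has_real_derivative D (Suc j) q) (at 0))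
    \<and> (\<forall>j\<le>n. continuous_on W (D j))"
proof (induction n arbitrary: g)
  case 0
  then show ?case using C_on_imp_continuous_on[OF W] by (intro exI[of _ "\<lambda>_. g"]) auto
next
  case (Suc n)
  obtain G where G: "\<forall>q\<in>W. ((\<lambda>t. g (q + t *\<^sub>R e)) has_real_derivative G q) (at 0)" "C_on n W G"
    using Suc.prems e by auto
  obtain D where D: "D 0 = G" "\<forall>j<n. \<forall>q\<in>W. ((\<lambda>s. D j (q + s *\<^sub>R e)) has_real_derivative D (Suc j) q) (at 0)"
    "\<forall>j\<le>n. continuous_on W (D j)"
    using Suc.IH[OF G(2)] by blast
  have "continuous_on W g" using C_on_imp_continuous_on[OF W Suc.prems] .
  then show ?case
    using G(1) D by (intro exI[of _ "case_nat g D"]) (auto split: nat.split)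
qed

lemma C_on_time_derivatives:
  fixes h :: "real \<Rightarrow> 'b::euclidean_space \<Rightarrow> real"
  assumes W: "open W" and h: "C_on N W (\<lambda>p. h (fst p) (snd p))"
  shows "\<exists>D. D 0 = (\<lambda>p. h (fst p) (snd p))
    \<and> (\<forall>m<N. \<forall>s x0. (s, x0) \<in> W \<longrightarrow>
          ((\<lambda>s. D m (s, x0)) has_real_derivative D (Suc m) (s, x0)) (at s))
    \<and> (\<forall>m\<le>N. continuous_on W (D m))"
proof -
  have "(1, 0) \<in> (Basis :: (real \<times> 'b) set)" by (simp add: Basis_prod_def)
  then obtain D where D0: "D 0 = (\<lambda>p. h (fst p) (snd p))"
    and Dd: "\<forall>j<N. \<forall>q\<in>W. ((\<lambda>s. D j (q + s *\<^sub>R (1, 0))) has_real_derivative D (Suc j) q) (at 0)"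
    and Dc: "\<forall>j\<le>N. continuous_on W (D j)"
    using C_on_iterated_directional_derivatives[OF W _ h] by blast
  have "((\<lambda>s. D m (s, x0)) has_real_derivative D (Suc m) (s, x0)) (at s)"
    if "m < N" "(s, x0) \<in> W" for m s x0
  proof -
    have "((\<lambda>t. D m ((0, x0) + s *\<^sub>R (1, 0) + t *\<^sub>R (1, 0))) has_real_derivative D (Suc m) (s, x0)) (at 0)"
      using Dd[rule_format, OF that] by simp
    then show ?thesis using has_real_derivative_line_shift by fastforce
  qed
  with D0 Dc show ?thesis by blast
qed

lemma C_on_uniform_Maclaurin_bound:
  fixes h :: "real \<Rightarrow> 'b::euclidean_space \<Rightarrow> real"
  assumes W: "open W" and S: "compact S" and \<epsilon>: "0 \<le> \<epsilon>" and KW: "{0..\<epsilon>} \<times> S \<subseteq> W"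
    and h: "C_on N W (\<lambda>p. h (fst p) (snd p))" and N: "0 < N"
  obtains C d where "0 \<le> C" and "\<And>m. m < N \<Longrightarrow> continuous_on S (d m)"
    and "\<And>x0 t. x0 \<in> S \<Longrightarrow> t \<in> {0..\<epsilon>} \<Longrightarrow> \<bar>h t x0 - (\<Sum>m<N. d m x0 * t ^ m)\<bar> \<le> C * t ^ N"
proof -
  obtain D where D0: "D 0 = (\<lambda>p. h (fst p) (snd p))"
    and Dt: "\<forall>m<N. \<forall>s x0. (s, x0) \<in> W \<longrightarrow>
      ((\<lambda>s. D m (s, x0)) has_real_derivative D (Suc m) (s, x0)) (at s)"
    and Dc: "\<forall>m\<le>N. continuous_on W (D m)"
    using C_on_time_derivatives[OF W h] by blast
  define K where "K = {0..\<epsilon>} \<times> S"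
  have "continuous_on K (D N)"
    using continuous_on_subset[of W "D N" K] Dc KW by (simp add: K_def)
  then have "compact (D N ` K)"
    using S by (intro compact_continuous_image) (simp_all add: K_def compact_Times)
  then obtain B where "\<forall>y\<in>D N ` K. norm y \<le> B"
    unfolding bounded_iff by (metis compact_imp_bounded bounded_iff)
  then have B: "\<And>p. p \<in> K \<Longrightarrow> \<bar>D N p\<bar> \<le> B" by auto
  define d where "d m x0 = D m (0, x0) / fact m" for m x0
  show ?thesis
  proof (rule that[of "\<bar>B\<bar> / fact N" d])
    fix m assume "m < N"
    have "continuous_on W (D m)" "(\<lambda>x0. (0, x0)) ` S \<subseteq> W"
      using Dc \<open>m < N\<close> KW \<epsilon> by auto
    then have "continuous_on ((\<lambda>x0. (0, x0)) ` S) (D m)"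
      by (rule continuous_on_subset)
    then have "continuous_on S (\<lambda>x0. D m (0, x0))"
      by (rule continuous_on_compose2[OF _ continuous_on_Pair[OF continuous_on_const continuous_on_id]])
        simp
    then show "continuous_on S (d m)"
      unfolding d_def by (intro continuous_intros) auto
  next
    fix x0 t assume x0: "x0 \<in> S" and t: "t \<in> {0..\<epsilon>}"
    show "\<bar>h t x0 - (\<Sum>m<N. d m x0 * t ^ m)\<bar> \<le> \<bar>B\<bar> / fact N * t ^ N"
    proof (cases "t = 0")
      case True
      then show ?thesis using N D0 by (cases N) (simp_all add: d_def sum.lessThan_Suc_shift)
    next
      case False
      then have "0 < t" using t by simp
      have "\<exists>\<xi>. 0 < \<xi> \<and> \<xi> < t \<and> (\<lambda>s. D 0 (s, x0)) t =
          (\<Sum>m<N. D m (0, x0) / fact m * t ^ m) + D N (\<xi>, x0) / fact N * t ^ N"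
      proof (rule Maclaurin[where diff = "\<lambda>m s. D m (s, x0)"])
        show "\<forall>m s. m < N \<and> 0 \<le> s \<and> s \<le> t \<longrightarrow>
            ((\<lambda>s. D m (s, x0)) has_real_derivative D (Suc m) (s, x0)) (at s)"
          using KW x0 t by (auto intro!: Dt[rule_format])
      qed (use \<open>0 < t\<close> N in simp_all)
      then obtain \<xi> where \<xi>: "0 < \<xi>" "\<xi> < t"
        and taylor: "h t x0 = (\<Sum>m<N. d m x0 * t ^ m) + D N (\<xi>, x0) / fact N * t ^ N"
        using D0 by (auto simp: d_def)
      have "\<bar>D N (\<xi>, x0)\<bar> \<le> \<bar>B\<bar>"
        using B[of "(\<xi>, x0)"] \<xi> t x0 by (auto simp: K_def)
      then show ?thesis
        using taylor t by (simp add: abs_mult divide_right_mono mult_right_mono)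
    qed
  qed simp
qed

lemma poly_smallo_power_imp_coeff_zero:
  fixes d :: "nat \<Rightarrow> real"
  assumes "(\<lambda>t. \<Sum>m\<le>n. d m * t ^ m) \<in> o[at_right 0](\<lambda>t. t ^ n)" and "m \<le> n"
  shows "d m = 0"
  using assms
proof (induction n arbitrary: d m)
  case 0
  then have "((\<lambda>t. d 0) \<longlongrightarrow> 0) (at_right (0::real))"
    using smalloD_tendsto by fastforce
  then show ?case using 0 tendsto_const_iff trivial_limit_at_right_real by fastforce
next
  case (Suc n)
  let ?P = "\<lambda>t::real. \<Sum>m\<le>Suc n. d m * t ^ m"
  let ?Q = "\<lambda>t::real. \<Sum>m\<le>n. d (Suc m) * t ^ m"
  have "((\<lambda>t. t ^ Suc n) \<longlongrightarrow> 0) (at_right (0::real))"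
    by (intro tendsto_eq_intros) auto
  then have "((\<lambda>t. ?P t / t ^ Suc n * t ^ Suc n) \<longlongrightarrow> 0) (at_right 0)"
    using tendsto_mult[OF smalloD_tendsto[OF Suc.prems(1)]] by fastforce
  moreover have "\<forall>\<^sub>F t in at_right 0. ?P t / t ^ Suc n * t ^ Suc n = ?P t"
    using eventually_at_right_less by (rule eventually_mono) simp
  ultimately have "(?P \<longlongrightarrow> 0) (at_right 0)"
    by (rule Lim_transform_eventually)
  moreover have "(?P \<longlongrightarrow> ?P 0) (at_right 0)"
    by (intro tendsto_intros)
  ultimately have d0: "d 0 = 0"
    using tendsto_unique[OF trivial_limit_at_right_real] by (fastforce simp: sum.atMost_Suc_shift)
  have "?P = (\<lambda>t. t * ?Q t)"
    by (simp add: fun_eq_iff sum.atMost_Suc_shift d0 sum_distrib_left mult_ac del: sum.atMost_Suc)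
  with Suc.prems(1) have Q: "?Q \<in> o[at_right 0](\<lambda>t. t ^ n)"
    using landau_o.small.mult_cancel_left[of "\<lambda>t. t" "at_right 0" "\<lambda>t. t" ?Q "\<lambda>t. t ^ n"]
    by (auto simp: eventually_at_right_less eventually_mono[OF eventually_at_right_less])
  have "d (Suc m') = 0" if "m' \<le> n" for m'
    using Suc.IH[of "\<lambda>m. d (Suc m)" m'] Q that by simp
  then show ?case using d0 Suc.prems(2) by (cases m) auto
qed

lemma Maclaurin_coeffs_eq_if_smallo:
  fixes g :: "real \<Rightarrow> real" and d :: "nat \<Rightarrow> real"
  assumes \<epsilon>: "0 < \<epsilon>"
    and bound: "\<And>t. t \<in> {0<..\<epsilon>} \<Longrightarrow> \<bar>g t - (\<Sum>m\<le>n. d m * t ^ m)\<bar> \<le> C * t ^ Suc n"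
    and a: "(\<lambda>t. g t - a * t ^ n) \<in> o[at_right 0](\<lambda>t. t ^ n)"
    and "m \<le> n"
  shows "d m = (if m = n then a else 0)"
proof -
  let ?P = "\<lambda>t. \<Sum>m\<le>n. d m * t ^ m"
  have "(\<lambda>t. g t - ?P t) \<in> O[at_right 0](\<lambda>t. t ^ Suc n)"
  proof (rule bigoI)
    show "\<forall>\<^sub>F t in at_right 0. norm (g t - ?P t) \<le> C * norm (t ^ Suc n)"
      using eventually_at_right_real[OF \<epsilon>]
    proof (rule eventually_mono)
      fix t assume "t \<in> {0<..<\<epsilon>}"
      then show "norm (g t - ?P t) \<le> C * norm (t ^ Suc n)"
        using bound[of t] by (simp add: power_abs)
    qed
  qed
  moreover have "(\<lambda>t. t ^ Suc n) \<in> o[at_right 0](\<lambda>t::real. t ^ n)"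
  proof (rule smalloI_tendsto)
    have "\<forall>\<^sub>F t in at_right (0::real). t = t ^ Suc n / t ^ n"
      using eventually_at_right_less by (rule eventually_mono) simp
    then show "((\<lambda>t. t ^ Suc n / t ^ n) \<longlongrightarrow> 0) (at_right (0::real))"
      by (rule Lim_transform_eventually[OF tendsto_ident_at])
    show "\<forall>\<^sub>F t in at_right 0. t ^ n \<noteq> (0::real)"
      using eventually_at_right_less by (rule eventually_mono) simp
  qed
  ultimately have "(\<lambda>t. g t - ?P t) \<in> o[at_right 0](\<lambda>t. t ^ n)"
    by (rule landau_o.big_small_trans)
  with a have "(\<lambda>t. (g t - a * t ^ n) - (g t - ?P t)) \<in> o[at_right 0](\<lambda>t. t ^ n)"
    by (rule sum_in_smallo(2))
  moreover have "(g t - a * t ^ n) - (g t - ?P t) = (\<Sum>m\<le>n. (d m - (if m = n then a else 0)) * t ^ m)"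
    for t :: real
    by (simp add: left_diff_distrib sum_subtractf if_distrib[of "\<lambda>c. c * _"] cong: if_cong)
  ultimately have "(\<lambda>t. \<Sum>m\<le>n. (d m - (if m = n then a else 0)) * t ^ m) \<in> o[at_right 0](\<lambda>t. t ^ n)"
    by simp
  then have "d m - (if m = n then a else 0) = 0"
    by (rule poly_smallo_power_imp_coeff_zero) (rule \<open>m \<le> n\<close>)
  then show ?thesis by simp
qed

lemma C_on_uniform_leading_term:
  fixes g :: "real \<Rightarrow> 'b::euclidean_space \<Rightarrow> real" and a :: "'b \<Rightarrow> real"
  assumes W: "open W" and S: "compact S" and \<epsilon>: "0 < \<epsilon>" and KW: "{0..\<epsilon>} \<times> S \<subseteq> W"
    and g: "C_on (Suc n) W (\<lambda>p. g (fst p) (snd p))"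
    and a: "\<And>x0. x0 \<in> S \<Longrightarrow> (\<lambda>t. g t x0 - a x0 * t ^ n) \<in> o[at_right 0](\<lambda>t. t ^ n)"
  obtains C where "0 \<le> C" and "continuous_on S a"
    and "\<And>x0 t. x0 \<in> S \<Longrightarrow> t \<in> {0..\<epsilon>} \<Longrightarrow> \<bar>g t x0 - a x0 * t ^ n\<bar> \<le> C * t ^ Suc n"
proof -
  obtain C d where C: "0 \<le> C" and d: "\<And>m. m < Suc n \<Longrightarrow> continuous_on S (d m)"
    and bound: "\<And>x0 t. x0 \<in> S \<Longrightarrow> t \<in> {0..\<epsilon>} \<Longrightarrow>
      \<bar>g t x0 - (\<Sum>m<Suc n. d m x0 * t ^ m)\<bar> \<le> C * t ^ Suc n"
    using C_on_uniform_Maclaurin_bound[OF W S less_imp_le[OF \<epsilon>] KW g zero_less_Suc] by metis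
  have coeff: "d m x0 = (if m = n then a x0 else 0)" if x0: "x0 \<in> S" and "m \<le> n" for x0 m
  proof (rule Maclaurin_coeffs_eq_if_smallo[where g = "\<lambda>t. g t x0" and d = "\<lambda>m. d m x0" and C = C])
    fix t :: real assume "t \<in> {0<..\<epsilon>}"
    then show "\<bar>g t x0 - (\<Sum>m\<le>n. d m x0 * t ^ m)\<bar> \<le> C * t ^ Suc n"
      using bound[OF x0, of t] by (simp add: lessThan_Suc_atMost)
  qed (use \<epsilon> a[OF x0] \<open>m \<le> n\<close> in auto)
  then have poly: "(\<Sum>m<Suc n. d m x0 * t ^ m) = a x0 * t ^ n" if "x0 \<in> S" for x0 t
    using that by (simp add: lessThan_Suc_atMost if_distrib[of "\<lambda>c. c * _"] cong: if_cong)
  have "continuous_on S (d n)"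
    using d by simp
  moreover have "\<And>x0. x0 \<in> S \<Longrightarrow> d n x0 = a x0"
    using coeff by simp
  ultimately have "continuous_on S a"
    using continuous_on_cong by force
  with C show ?thesis
    by (rule that) (use bound poly in simp)
qed

lemma C_vec_on_bound_linear_in_time:
  fixes X :: "real \<Rightarrow> 'b::euclidean_space \<Rightarrow> 'a::euclidean_space"
  assumes W: "open W" and S: "compact S" and \<epsilon>: "0 \<le> \<epsilon>" and KW: "{0..\<epsilon>} \<times> S \<subseteq> W"
    and X: "C_vec_on m W (\<lambda>p. X (fst p) (snd p))" "0 < m" and X0: "\<forall>x0\<in>S. X 0 x0 = 0"
  obtains M where "0 < M" and "\<And>x0 t. x0 \<in> S \<Longrightarrow> t \<in> {0..\<epsilon>} \<Longrightarrow> norm (X t x0) \<le> M * t"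
proof -
  have "\<forall>j\<in>Basis. \<exists>C\<ge>0. \<forall>x0\<in>S. \<forall>t\<in>{0..\<epsilon>}. \<bar>X t x0 \<bullet> j\<bar> \<le> C * t"
  proof
    fix j :: 'a assume j: "j \<in> Basis"
    have Cm: "C_on m W (\<lambda>p. X (fst p) (snd p) \<bullet> j)"
      using X(1) j by (simp add: C_vec_on_def)
    have C1: "C_on 1 W (\<lambda>p. X (fst p) (snd p) \<bullet> j)"
      using X(2) by (intro C_on_mono[OF W _ Cm]) simp
    obtain C d where C: "0 \<le> C" and "\<And>m. m < 1 \<Longrightarrow> continuous_on S (d m)"
      and bound1: "\<And>x0 t. x0 \<in> S \<Longrightarrow> t \<in> {0..\<epsilon>} \<Longrightarrow>
        \<bar>X t x0 \<bullet> j - (\<Sum>m<1. d m x0 * t ^ m)\<bar> \<le> C * t ^ 1"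
      using C_on_uniform_Maclaurin_bound[OF W S \<epsilon> KW C1 zero_less_one] by metis
    have bound: "\<bar>X t x0 \<bullet> j - d 0 x0\<bar> \<le> C * t" if "x0 \<in> S" "t \<in> {0..\<epsilon>}" for x0 t
      using bound1[OF that] by simp
    have "d 0 x0 = 0" if "x0 \<in> S" for x0
      using bound[OF that, of 0] X0 that \<epsilon> by simp
    then have "\<forall>x0\<in>S. \<forall>t\<in>{0..\<epsilon>}. \<bar>X t x0 \<bullet> j\<bar> \<le> C * t"
      using bound by simp
    with C show "\<exists>C\<ge>0. \<forall>x0\<in>S. \<forall>t\<in>{0..\<epsilon>}. \<bar>X t x0 \<bullet> j\<bar> \<le> C * t" by blast
  qed
  then obtain C where C: "\<forall>j\<in>Basis. 0 \<le> C j \<and> (\<forall>x0\<in>S. \<forall>t\<in>{0..\<epsilon>}. \<bar>X t x0 \<bullet> j\<bar> \<le> C j * t)"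
    by (auto dest!: bchoice)
  show ?thesis
  proof (rule that)
    show "0 < (\<Sum>j\<in>Basis. C j) + 1"
      using C by (simp add: add_nonneg_pos sum_nonneg)
    fix x0 t assume x0: "x0 \<in> S" and t: "t \<in> {0..\<epsilon>}"
    have "norm (X t x0) \<le> (\<Sum>j\<in>Basis. \<bar>X t x0 \<bullet> j\<bar>)"
      by (rule norm_le_l1)
    also have "\<dots> \<le> (\<Sum>j\<in>Basis. C j * t)"
      using C x0 t by (intro sum_mono) blast
    also have "\<dots> \<le> ((\<Sum>j\<in>Basis. C j) + 1) * t"
      using t by (simp add: sum_distrib_right distrib_right)
    finally show "norm (X t x0) \<le> ((\<Sum>j\<in>Basis. C j) + 1) * t" .
  qed
qed

section \<open>Lower bounds along test trajectories\<close>

lemma power_lower_bound_from_uniform_expansion: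
  fixes f :: "'a::real_normed_vector \<Rightarrow> real" and x :: "real \<Rightarrow> 'b \<Rightarrow> 'a"
  assumes \<alpha>: "0 < \<alpha>" and M: "0 < M" and C: "0 \<le> C" and \<epsilon>: "0 < \<epsilon>"
    and cover: "\<And>\<delta>. 0 < \<delta> \<Longrightarrow> \<delta> \<le> \<epsilon> \<Longrightarrow>
      \<exists>U. open U \<and> 0 \<in> U \<and> (\<forall>y\<in>U. \<exists>x0\<in>S. \<exists>t\<in>{0..\<delta>}. y = x t x0)"
    and expansion: "\<And>x0 t. x0 \<in> S \<Longrightarrow> t \<in> {0..\<epsilon>} \<Longrightarrow> \<bar>f (x t x0) - a x0 * t ^ n\<bar> \<le> C * t ^ Suc n"
    and a: "\<And>x0. x0 \<in> S \<Longrightarrow> \<alpha> \<le> a x0"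
    and linear: "\<And>x0 t. x0 \<in> S \<Longrightarrow> t \<in> {0..\<epsilon>} \<Longrightarrow> norm (x t x0) \<le> M * t"
  shows "\<exists>c>0. \<exists>U. open U \<and> 0 \<in> U \<and> (\<forall>y\<in>U. c * norm y ^ n \<le> f y)"
proof -
  define \<delta> where "\<delta> = min \<epsilon> (\<alpha> / (2 * (C + 1)))"
  have \<delta>: "0 < \<delta>" "\<delta> \<le> \<epsilon>" using \<epsilon> \<alpha> C by (auto simp: \<delta>_def)
  obtain U where U: "open U" "0 \<in> U" "\<forall>y\<in>U. \<exists>x0\<in>S. \<exists>t\<in>{0..\<delta>}. y = x t x0"
    using cover[OF \<delta>] by blast
  define c where "c = \<alpha> / 2 / M ^ n"
  have "c * norm y ^ n \<le> f y" if "y \<in> U" for y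
  proof -
    obtain x0 t where x0: "x0 \<in> S" and t\<delta>: "t \<in> {0..\<delta>}" and y: "y = x t x0"
      using U(3) \<open>y \<in> U\<close> by blast
    then have t: "0 \<le> t" "t \<le> \<delta>" and t\<epsilon>: "t \<in> {0..\<epsilon>}" using \<delta> by auto
    (* The choice of \<delta> makes the remainder at most half of the leading term. *)
    have "C * t \<le> C * (\<alpha> / (2 * (C + 1)))"
      using t C by (intro mult_left_mono) (auto simp: \<delta>_def)
    also have "\<dots> \<le> \<alpha> / 2"
      using C \<alpha> by (simp add: field_simps)
    finally have Ct: "C * t \<le> \<alpha> / 2" .
    have "C * t ^ Suc n \<le> \<alpha> / 2 * t ^ n"
      using mult_right_mono[OF Ct, of "t ^ n"] t by (simp add: mult.assoc)
    moreover have "\<alpha> * t ^ n \<le> a x0 * t ^ n"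
      using a[OF x0] t by (simp add: mult_right_mono)
    ultimately have lower: "\<alpha> / 2 * t ^ n \<le> f y"
      using expansion[OF x0 t\<epsilon>] unfolding y by linarith
    have "c * norm y ^ n \<le> c * (M * t) ^ n"
      using linear[OF x0 t\<epsilon>] y \<alpha> M by (intro mult_left_mono power_mono) (auto simp: c_def)
    also have "\<dots> = \<alpha> / 2 * t ^ n"
      using M by (simp add: c_def power_mult_distrib)
    finally show ?thesis using lower by linarith
  qed
  moreover have "c > 0" using \<alpha> M by (simp add: c_def)
  ultimately show ?thesis using U(1,2) by blast
qed

lemma indicative_trajectories_linear_bound:
  assumes "test_trajectories x S \<epsilon>" and "indicative x S \<epsilon> k f"
  obtains M where "0 < M" and "\<And>x0 t. x0 \<in> S \<Longrightarrow> t \<in> {0..\<epsilon>} \<Longrightarrow> norm (x t x0) \<le> M * t"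
proof -
  obtain W where W: "open W" "{0..\<epsilon>} \<times> S \<subseteq> W" "C_vec_on (2*k+1) W (\<lambda>p. x (fst p) (snd p))"
    using assms(2) by (auto simp: indicative_def)
  have S: "compact S" and \<epsilon>: "0 \<le> \<epsilon>" and x0: "\<forall>x0\<in>S. x 0 x0 = 0"
    using assms by (auto simp: indicative_def test_trajectories_def)
  have order: "0 < 2*k+1" by simp
  show ?thesis
    using C_vec_on_bound_linear_in_time[OF W(1) S \<epsilon> W(2,3) order x0] that by blast
qed

lemma indicative_trajectory_tendsto_0:
  assumes "test_trajectories x S \<epsilon>" and "indicative x S \<epsilon> k f" and "x0 \<in> S"
  shows "((\<lambda>t. x t x0) \<longlongrightarrow> 0) (at_right 0)"
proof -
  obtain M where M: "\<And>t. t \<in> {0..\<epsilon>} \<Longrightarrow> norm (x t x0) \<le> M * t"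
    using indicative_trajectories_linear_bound[OF assms(1,2)] assms(3) by metis
  have "0 < \<epsilon>" using assms(1) by (simp add: test_trajectories_def)
  then have "\<forall>\<^sub>F t in at_right 0. norm (x t x0) \<le> M * t"
    by (rule eventually_mono[OF eventually_at_right_real]) (simp add: M)
  moreover have "((\<lambda>t. M * t) \<longlongrightarrow> 0) (at_right 0)"
    by (auto intro!: tendsto_eq_intros)
  ultimately show ?thesis by (rule Lim_null_comparison)
qed

lemma indicative_imp_power_lower_bound:
  fixes f :: "'a::euclidean_space \<Rightarrow> real" and x :: "real \<Rightarrow> 'b::euclidean_space \<Rightarrow> 'a"
  assumes f: "C_on (2*k+1) UNIV f" and traj: "test_trajectories x S \<epsilon>" and ind: "indicative x S \<epsilon> k f"
    and a: "\<forall>x0\<in>S. (\<lambda>t. f (x t x0) - a x0 * t ^ (2*k)) \<in> o[at_right 0](\<lambda>t. t ^ (2*k))"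
    and pos: "\<forall>x0\<in>S. 0 < a x0"
  shows "\<exists>c>0. \<exists>U. open U \<and> 0 \<in> U \<and> (\<forall>y\<in>U. c * norm y ^ (2*k) \<le> f y)"
proof -
  have \<epsilon>: "0 < \<epsilon>" using traj by (simp add: test_trajectories_def)
  have S: "compact S"
    and cover: "\<And>\<delta>. 0 < \<delta> \<Longrightarrow> \<delta> \<le> \<epsilon> \<Longrightarrow>
      \<exists>U. open U \<and> 0 \<in> U \<and> (\<forall>y\<in>U. \<exists>x0\<in>S. \<exists>t\<in>{0..\<delta>}. y = x t x0)"
    using ind by (auto simp: indicative_def)
  obtain W where W: "open W" "{0..\<epsilon>} \<times> S \<subseteq> W" "C_vec_on (2*k+1) W (\<lambda>p. x (fst p) (snd p))"
    using ind by (auto simp: indicative_def)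
  have "C_on (2*k+1) W (\<lambda>p. f (x (fst p) (snd p)))"
    by (rule C_on_compose[OF W(1) f]) (use W(3) in \<open>unfold C_vec_on_def, blast\<close>)
  then have fx: "C_on (Suc (2*k)) W (\<lambda>p. f (x (fst p) (snd p)))"
    by (simp only: Suc_eq_plus1)
  have a': "\<And>x0. x0 \<in> S \<Longrightarrow> (\<lambda>t. f (x t x0) - a x0 * t ^ (2*k)) \<in> o[at_right 0](\<lambda>t. t ^ (2*k))"
    using a by blast
  obtain C where C: "0 \<le> C" and a_cont: "continuous_on S a"
    and expansion: "\<And>x0 t. x0 \<in> S \<Longrightarrow> t \<in> {0..\<epsilon>} \<Longrightarrow>
      \<bar>f (x t x0) - a x0 * t ^ (2*k)\<bar> \<le> C * t ^ Suc (2*k)"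
    using C_on_uniform_leading_term[where g = "\<lambda>t x0. f (x t x0)", OF W(1) S \<epsilon> W(2) fx a'] by blast
  have "S \<noteq> {}"
    using cover[OF \<epsilon> order_refl] by auto
  then obtain x1 where x1: "x1 \<in> S" "\<And>x0. x0 \<in> S \<Longrightarrow> a x1 \<le> a x0"
    using continuous_attains_inf[OF S _ a_cont] by blast
  obtain M where M: "0 < M" "\<And>x0 t. x0 \<in> S \<Longrightarrow> t \<in> {0..\<epsilon>} \<Longrightarrow> norm (x t x0) \<le> M * t"
    using indicative_trajectories_linear_bound[OF traj ind] by metis
  show ?thesis
    by (rule power_lower_bound_from_uniform_expansion[OF _ M(1) C \<epsilon> cover expansion x1(2) M(2)])
      (use pos x1(1) in blast)
qed

lemma smallo_leading_term_uminus:
  fixes g :: "real \<Rightarrow> real"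
  assumes "(\<lambda>t. g t - c * t ^ n) \<in> o[F](\<lambda>t. t ^ n)"
  shows "(\<lambda>t. - g t - (- c) * t ^ n) \<in> o[F](\<lambda>t. t ^ n)"
  using landau_o.small.uminus_in_iff[of "\<lambda>t. g t - c * t ^ n"] assms by simp

lemma indicative_uminus:
  assumes "indicative x S \<epsilon> k f"
  shows "indicative x S \<epsilon> k (\<lambda>y. - f y)"
proof -
  from assms have "\<forall>x0\<in>S. \<exists>a. (\<lambda>t. f (x t x0) - a * t ^ (2*k)) \<in> o[at_right 0](\<lambda>t. t ^ (2*k))"
    unfolding indicative_def by (elim conjE)
  then have "\<forall>x0\<in>S. \<exists>a. (\<lambda>t. - f (x t x0) - a * t ^ (2*k)) \<in> o[at_right 0](\<lambda>t. t ^ (2*k))"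
  proof (intro ballI, elim ballE exE)
    fix x0 a assume "(\<lambda>t. f (x t x0) - a * t ^ (2*k)) \<in> o[at_right 0](\<lambda>t. t ^ (2*k))"
    then have "(\<lambda>t. - f (x t x0) - (- a) * t ^ (2*k)) \<in> o[at_right 0](\<lambda>t. t ^ (2*k))"
      by (rule smallo_leading_term_uminus)
    then show "\<exists>a. (\<lambda>t. - f (x t x0) - a * t ^ (2*k)) \<in> o[at_right 0](\<lambda>t. t ^ (2*k))" ..
  qed auto
  with assms show ?thesis
    unfolding indicative_def by (elim conjE) (intro conjI)
qed

lemma positive_value_near_0_if_leading_coeff_pos:
  fixes f :: "'a::real_normed_vector \<Rightarrow> real" and \<gamma> :: "real \<Rightarrow> 'a"
  assumes \<alpha>: "0 < \<alpha>"
    and expansion: "(\<lambda>t. f (\<gamma> t) - \<alpha> * t ^ n) \<in> o[at_right 0](\<lambda>t. t ^ n)"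
    and \<gamma>: "(\<gamma> \<longlongrightarrow> 0) (at_right 0)" and U: "open U" "0 \<in> U"
  shows "\<exists>y\<in>U. 0 < f y"
proof -
  have "\<forall>\<^sub>F t in at_right 0. norm (f (\<gamma> t) - \<alpha> * t ^ n) \<le> \<alpha> / 2 * norm (t ^ n)"
    by (rule landau_o.smallD[OF expansion]) (simp add: \<alpha>)
  then have "\<forall>\<^sub>F t in at_right 0. \<gamma> t \<in> U \<and> 0 < f (\<gamma> t)"
    using topological_tendstoD[OF \<gamma> U] eventually_at_right_less[of "0::real"]
  proof eventually_elim
    case (elim t)
    then have "\<alpha> * t ^ n - \<alpha> / 2 * t ^ n \<le> f (\<gamma> t)"
      using abs_ge_minus_self[of "f (\<gamma> t) - \<alpha> * t ^ n"] by simp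
    moreover have "0 < \<alpha> / 2 * t ^ n" using elim \<alpha> by simp
    ultimately show ?case using elim by linarith
  qed
  then show ?thesis
    using eventually_happens trivial_limit_at_right_real by blast
qed

lemma strict_local_min_if_power_lower_bound:
  fixes g :: "'a::real_normed_vector \<Rightarrow> real"
  assumes g0: "g 0 = 0" and "\<exists>c>0. \<exists>U. open U \<and> 0 \<in> U \<and> (\<forall>y\<in>U. c * norm y ^ n \<le> g y)"
  shows "\<exists>U. open U \<and> 0 \<in> U \<and> (\<forall>y\<in>U - {0}. g 0 < g y)"
proof -
  obtain c U where c: "0 < c" and U: "open U" "0 \<in> U" and bound: "\<forall>y\<in>U. c * norm y ^ n \<le> g y"
    using assms(2) by blast
  have "g 0 < g y" if "y \<in> U - {0}" for y
  proof -
    have "0 < c * norm y ^ n" using c that by simp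
    also have "\<dots> \<le> g y" using bound that by blast
    finally show ?thesis using g0 by simp
  qed
  then show ?thesis using U by blast
qed

lemma indicative_saddle_point:
  fixes f :: "'a::euclidean_space \<Rightarrow> real"
  assumes traj: "test_trajectories x S \<epsilon>" and ind: "indicative x S \<epsilon> k f"
    and a: "\<forall>x0\<in>S. (\<lambda>t. f (x t x0) - a x0 * t ^ (2*k)) \<in> o[at_right 0](\<lambda>t. t ^ (2*k))"
    and p: "p \<in> S" "0 < a p" and q: "q \<in> S" "a q < 0"
  shows "saddle_point f"
  unfolding saddle_point_def
proof (intro allI impI conjI)
  fix U :: "'a set" assume "open U \<and> 0 \<in> U"
  then have U: "open U" "0 \<in> U" by auto
  show "\<exists>y\<in>U. 0 < f y"
    using positive_value_near_0_if_leading_coeff_pos[where f = f and \<gamma> = "\<lambda>t. x t p",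
        OF p(2) a[rule_format, OF p(1)] indicative_trajectory_tendsto_0[OF traj ind p(1)] U] .
  have "(\<lambda>t. - f (x t q) - (- a q) * t ^ (2*k)) \<in> o[at_right 0](\<lambda>t. t ^ (2*k))"
    using a q(1) by (intro smallo_leading_term_uminus) blast
  from positive_value_near_0_if_leading_coeff_pos[where f = "\<lambda>y. - f y" and \<gamma> = "\<lambda>t. x t q",
      OF _ this indicative_trajectory_tendsto_0[OF traj ind q(1)] U]
  show "\<exists>y\<in>U. f y < 0"
    using q(2) by auto
qed

theorem proposition6p2:
  fixes f :: "'a::euclidean_space \<Rightarrow> real"
    and x :: "real \<Rightarrow> 'b::euclidean_space \<Rightarrow> 'a"
    and S :: "'b set" and \<epsilon> :: real and k :: nat
    and a :: "'b \<Rightarrow> real"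
  assumes k: "k \<ge> 1"
    and f_C: "C_on (2*k+1) UNIV f"
    and crit: "(f has_derivative (\<lambda>_. 0)) (at 0)"
    and f0: "f 0 = 0"
    and traj: "test_trajectories x S \<epsilon>"
    and ind: "indicative x S \<epsilon> k f"
    and a_coeff: "\<forall>x0\<in>S. (\<lambda>t. f (x t x0) - a x0 * t ^ (2*k)) \<in> o[at_right 0](\<lambda>t. t ^ (2*k))"
  shows "((\<forall>x0\<in>S. a x0 > 0) \<longrightarrow>
            (\<exists>c>0. \<exists>U. open U \<and> 0 \<in> U \<and> (\<forall>y\<in>U. f y \<ge> c * norm y ^ (2*k)))
          \<and> (\<exists>U. open U \<and> 0 \<in> U \<and> (\<forall>y\<in>U - {0}. f y > f 0)))
       \<and> ((\<forall>x0\<in>S. a x0 < 0) \<longrightarrow>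
            (\<exists>c>0. \<exists>U. open U \<and> 0 \<in> U \<and> (\<forall>y\<in>U. f y \<le> - c * norm y ^ (2*k)))
          \<and> (\<exists>U. open U \<and> 0 \<in> U \<and> (\<forall>y\<in>U - {0}. f y < f 0)))
       \<and> ((\<exists>x0\<in>S. a x0 > 0) \<and> (\<exists>x0\<in>S. a x0 < 0) \<longrightarrow> saddle_point f)"
proof -
  have neg_a: "\<forall>x0\<in>S. (\<lambda>t. - f (x t x0) - (- a x0) * t ^ (2*k)) \<in> o[at_right 0](\<lambda>t. t ^ (2*k))"
  proof
    fix x0 assume "x0 \<in> S"
    with a_coeff show "(\<lambda>t. - f (x t x0) - (- a x0) * t ^ (2*k)) \<in> o[at_right 0](\<lambda>t. t ^ (2*k))"
      by (intro smallo_leading_term_uminus) blast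
  qed
  show ?thesis
  proof (intro conjI impI)
    assume "\<forall>x0\<in>S. a x0 > 0"
    then show lower: "\<exists>c>0. \<exists>U. open U \<and> 0 \<in> U \<and> (\<forall>y\<in>U. f y \<ge> c * norm y ^ (2*k))"
      by (rule indicative_imp_power_lower_bound[OF f_C traj ind a_coeff])
    show "\<exists>U. open U \<and> 0 \<in> U \<and> (\<forall>y\<in>U - {0}. f y > f 0)"
      using strict_local_min_if_power_lower_bound[OF f0 lower] .
  next
    assume "\<forall>x0\<in>S. a x0 < 0"
    then have upper: "\<exists>c>0. \<exists>U. open U \<and> 0 \<in> U \<and> (\<forall>y\<in>U. c * norm y ^ (2*k) \<le> - f y)"
      by (intro indicative_imp_power_lower_bound[OF C_on_uminus[OF open_UNIV f_C] traj
          indicative_uminus[OF ind] neg_a]) simp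
    then show "\<exists>c>0. \<exists>U. open U \<and> 0 \<in> U \<and> (\<forall>y\<in>U. f y \<le> - c * norm y ^ (2*k))"
      by (simp add: le_minus_iff)
    show "\<exists>U. open U \<and> 0 \<in> U \<and> (\<forall>y\<in>U - {0}. f y < f 0)"
      using strict_local_min_if_power_lower_bound[of "\<lambda>y. - f y", OF _ upper] f0 by simp
  next
    assume "(\<exists>x0\<in>S. a x0 > 0) \<and> (\<exists>x0\<in>S. a x0 < 0)"
    then show "saddle_point f"
      using indicative_saddle_point[OF traj ind a_coeff] by blast
  qed
qed

end
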